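(* Let $n\ge0$ be an integer with $\chi_n>c^2$. Let $x_1<x_2<\dots$ be the roots of $\psi_n$ in $(1,\infty)$ and $y_1<y_2<\dots$ the roots of $\psi_n'$ in $(1,\infty)$. Then $$1<\frac{\sqrt{\chi_n}}{c}<y_1<x_1<y_2<x_2<\cdots.$$
   Context: For a real number $c>0$, let $\psi_0,\psi_1,\dots$ be the prolate spheroidal wave functions of band limit $c$: the real $L^2[-1,1]$-normalized eigenfunctions of $F_c[\varphi](x)=\int_{-1}^1\varphi(t)e^{icxt}\,dt$ with eigenvalues $\lambda_n$ ordered by $|\lambda_n|\ge|\lambda_{n+1}|$, extended to entire functions by $\lambda_n\psi_n(x)=\int_{-1}^1\psi_n(t)e^{icxt}\,dt$. $\chi_0<\chi_1<\dots$ are the positive numbers such that $\psi_n$ satisfies $(1-x^2)\psi''(x)-2x\psi'(x)+(\chi_n-c^2x^2)\psi(x)=0$ for all $x$. *)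

theory Defs
  imports "HOL-Analysis.Analysis"
begin

definition fin_fourier :: "real \<Rightarrow> (real \<Rightarrow> real) \<Rightarrow> real \<Rightarrow> complex" where
  "fin_fourier c phi x =
     integral {-1..1} (\<lambda>t. complex_of_real (phi t) * exp (\<i> * complex_of_real (c * x * t)))"

text \<open>A complete system of prolate spheroidal wave functions of band limit c:
  lam k are the eigenvalues of F_c, ordered by non-increasing modulus, Psi k the
  corresponding real L^2[-1,1]-orthonormal eigenfunctions, forming a complete system in
  L^2[-1,1] (tested against continuous functions, which are dense), each Psi k extended
  to the whole real line by lam k * Psi k x = F_c[Psi k](x).\<close>
definition pswf_system :: "real \<Rightarrow> (nat \<Rightarrow> complex) \<Rightarrow> (nat \<Rightarrow> real \<Rightarrow> real) \<Rightarrow> bool" where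
  "pswf_system c lam Psi \<longleftrightarrow>
     (\<forall>k. continuous_on UNIV (Psi k)) \<and>
     (\<forall>k x. lam k * complex_of_real (Psi k x) = fin_fourier c (Psi k) x) \<and>
     (\<forall>j k. integral {-1..1} (\<lambda>t. Psi j t * Psi k t) = (if j = k then 1 else 0)) \<and>
     (\<forall>k. norm (lam k) \<ge> norm (lam (Suc k))) \<and>
     (\<forall>f. continuous_on {-1..1} f \<and> (\<forall>k. integral {-1..1} (\<lambda>t. f t * Psi k t) = 0)
          \<longrightarrow> (\<forall>t\<in>{-1..1}. f t = (0::real)))"

definition prolate_ode :: "real \<Rightarrow> real \<Rightarrow> (real \<Rightarrow> real) \<Rightarrow> bool" where
  "prolate_ode c chi psi \<longleftrightarrow>
     (\<forall>x. (1 - x\<^sup>2) * deriv (deriv psi) x - 2 * x * deriv psi x + (chi - c\<^sup>2 * x\<^sup>2) * psi x = 0)"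

end

theory Submission
  imports Defs
begin

text \<open>Since \<open>\<lambda>\<^sub>n \<noteq> 0\<close> (otherwise every moment of \<open>\<psi>\<^sub>n\<close> would vanish, which by Weierstrass
  approximation contradicts \<open>\<parallel>\<psi>\<^sub>n\<parallel> = 1\<close>), \<open>\<psi>\<^sub>n = F\<^sub>c[\<psi>\<^sub>n] / \<lambda>\<^sub>n\<close> is smooth and solves the prolate
  equation classically. Moreover \<open>\<psi>\<^sub>n(1) \<noteq> 0\<close>: otherwise two Lyapunov functions force \<open>\<psi>\<^sub>n = 0\<close>
  on \<open>(-1, 1)\<close>. Normalise \<open>\<psi>\<^sub>n(1) > 0\<close> and put \<open>T = \<surd>\<chi>\<^sub>n / c > 1\<close>. On \<open>[1, T]\<close> the function
  \<open>(t\<^sup>2 - 1) \<psi> \<psi>'\<close> increases from 0, so \<open>\<psi>, \<psi>' > 0\<close> there; beyond \<open>T\<close> the energy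
  \<open>((t\<^sup>2 - 1) \<psi>')\<^sup>2 + (1 - t\<^sup>2) (\<chi> - c\<^sup>2 t\<^sup>2) \<psi>\<^sup>2\<close> is increasing and positive, so \<open>\<psi>\<close> and \<open>\<psi>'\<close> have
  no common zero. Hence every critical point in \<open>(1, \<infinity>)\<close> lies beyond \<open>T\<close> and satisfies
  \<open>\<psi> \<psi>'' < 0\<close>, so critical points are isolated and \<open>\<psi>\<close> changes sign between consecutive ones;
  Sturm comparison with \<open>sin (a (t - \<alpha>))\<close> shows there are infinitely many. Between two consecutive
  critical points \<open>\<psi>\<close> thus has a zero, unique by Rolle, and \<open>\<psi> > 0\<close> up to the first one.\<close>

lemma sign_change_imp_root:
  fixes g :: "real \<Rightarrow> real"
  assumes "a \<le> b" "continuous_on {a..b} g" "g a * g b \<le> 0"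
  shows "\<exists>z\<in>{a..b}. g z = 0"
proof -
  consider "g a = 0" | "g a < 0" "g b \<ge> 0" | "g a > 0" "g b \<le> 0"
    using assms(3) by (meson linorder_neqE_linordered_idom mult_le_0_iff not_le)
  then show ?thesis
  proof cases
    case 1
    then show ?thesis using assms(1) by auto
  next
    case 2
    then show ?thesis using IVT'[of g a 0 b] assms(1,2) by auto
  next
    case 3
    then show ?thesis using IVT2'[of g b 0 a] assms(1,2) by auto
  qed
qed

lemma nonzero_imp_same_sign:
  fixes g :: "real \<Rightarrow> real"
  assumes "a \<le> b" "continuous_on {a..b} g" "\<And>t. t \<in> {a..b} \<Longrightarrow> g t \<noteq> 0"
  shows "g a * g b > 0"
  using sign_change_imp_root[OF assms(1,2)] assms(3) by (meson not_le)

lemma not_islimpt_zeros: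
  fixes g :: "real \<Rightarrow> real"
  assumes "(g has_real_derivative d) (at z)" "g z \<noteq> 0 \<or> d \<noteq> 0"
  shows "\<not> z islimpt {t. g t = 0}"
proof -
  have "\<forall>\<^sub>F t in at z. g t \<noteq> 0"
  proof (cases "g z = 0")
    case True
    have "((\<lambda>t. (g t - g z) / (t - z)) \<longlongrightarrow> d) (at z)"
      using assms(1) by (simp add: has_field_derivative_iff)
    then have "\<forall>\<^sub>F t in at z. (g t - g z) / (t - z) \<noteq> 0"
      using True assms(2) by (intro tendsto_imp_eventually_ne) auto
    then show ?thesis by (rule eventually_mono) (use True in auto)
  next
    case False
    have "isCont g z" using assms(1) by (rule DERIV_isCont)
    then have "\<forall>\<^sub>F t in at z. g t \<noteq> 0"
      using False by (simp add: isCont_def tendsto_imp_eventually_ne)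
    then show ?thesis .
  qed
  then show ?thesis by (simp add: islimpt_iff_eventually)
qed

lemma DERIV_nonneg_at_root_of_positive_right:
  fixes g :: "real \<Rightarrow> real"
  assumes "(g has_real_derivative d) (at a)" "g a = 0" "a < b" "\<And>t. a < t \<Longrightarrow> t < b \<Longrightarrow> g t > 0"
  shows "d \<ge> 0"
proof (rule ccontr)
  assume "\<not> d \<ge> 0"
  then obtain e where "e > 0" "\<And>h. 0 < h \<Longrightarrow> h < e \<Longrightarrow> g (a + h) < g a"
    using DERIV_neg_dec_right[OF assms(1)] by force
  moreover define h where "h = min (e/2) ((b - a)/2)"
  ultimately have "0 < h" "h < e" "h < b - a" "g (a + h) < g a" using assms(3) by (auto simp: h_def min_def)
  then show False using assms(2) assms(4)[of "a + h"] by simp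
qed

lemma DERIV_nonpos_at_root_of_positive_left:
  fixes g :: "real \<Rightarrow> real"
  assumes "(g has_real_derivative d) (at b)" "g b = 0" "a < b" "\<And>t. a < t \<Longrightarrow> t < b \<Longrightarrow> g t > 0"
  shows "d \<le> 0"
proof (rule ccontr)
  assume "\<not> d \<le> 0"
  then obtain e where "e > 0" "\<And>h. 0 < h \<Longrightarrow> h < e \<Longrightarrow> g (b - h) < g b"
    using DERIV_pos_inc_left[OF assms(1)] by force
  moreover define h where "h = min (e/2) ((b - a)/2)"
  ultimately have "0 < h" "h < e" "h < b - a" "g (b - h) < g b" using assms(3) by (auto simp: h_def min_def)
  then show False using assms(2) assms(4)[of "b - h"] by simp
qed

lemma exists_bracket_index:
  fixes y :: "nat \<Rightarrow> real"
  assumes "\<exists>k. t < y k" "y 0 \<le> t"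
  shows "\<exists>k. y k \<le> t \<and> t < y (Suc k)"
proof -
  define k where "k = (LEAST k. t < y k)"
  have "t < y k" unfolding k_def using assms(1) by (rule LeastI_ex)
  moreover have "k \<noteq> 0"
  proof
    assume "k = 0"
    then show False using \<open>t < y k\<close> assms(2) by simp
  qed
  then obtain j where "k = Suc j" using not0_implies_Suc by blast
  moreover have "\<not> t < y j"
  proof
    assume "t < y j"
    then have "k \<le> j" unfolding k_def by (rule Least_le)
    then show False using \<open>k = Suc j\<close> by simp
  qed
  ultimately show ?thesis by (intro exI[of _ j]) auto
qed

lemma strict_mono_not_in_range_between:
  fixes y :: "nat \<Rightarrow> 'a::linorder"
  assumes "strict_mono y" "y k < t" "t < y (Suc k)"
  shows "t \<notin> range y"
proof
  assume "t \<in> range y"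
  then obtain j where "t = y j" by blast
  with assms have "k < j" "j < Suc k" by (auto simp: strict_mono_less)
  then show False by simp
qed

lemma exists_least_if_finite_below:
  fixes S :: "real set"
  assumes "\<And>b. finite {s\<in>S. s \<le> b}" "T \<subseteq> S" "t0 \<in> T"
  shows "\<exists>m\<in>T. \<forall>t\<in>T. m \<le> t"
proof -
  define M where "M = Min {t\<in>T. t \<le> t0}"
  have "finite {t\<in>T. t \<le> t0}"
    by (rule rev_finite_subset[OF assms(1)[of t0]]) (use assms(2) in auto)
  then have "M \<in> T" "M \<le> t0" "\<And>t. t \<in> T \<Longrightarrow> t \<le> t0 \<Longrightarrow> M \<le> t"
    using Min_in[of "{t\<in>T. t \<le> t0}"] assms(3) unfolding M_def by auto
  then have "M \<le> t" if "t \<in> T" for t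
    using that by (cases "t \<le> t0") auto
  with \<open>M \<in> T\<close> show ?thesis by blast
qed

lemma strict_mono_unbounded_if_finite_below:
  fixes y :: "nat \<Rightarrow> real"
  assumes "strict_mono y" "range y \<subseteq> S" "\<And>b. finite {s\<in>S. s \<le> b}"
  shows "\<exists>k. b < y k"
proof (rule ccontr)
  assume "\<nexists>k. b < y k"
  then have "range y \<subseteq> {s\<in>S. s \<le> b}" using assms(2) by (auto simp: not_less)
  then have "finite (range y)" using assms(3) by (rule finite_subset)
  from finite_imageD[OF this strict_mono_imp_inj_on[OF assms(1)]] show False by simp
qed

lemma exists_strict_mono_enumeration:
  fixes S :: "real set"
  assumes finite_below: "\<And>b. finite {s\<in>S. s \<le> b}" and unbounded: "\<And>b. \<exists>s\<in>S. b < s"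
  shows "\<exists>y :: nat \<Rightarrow> real. strict_mono y \<and> range y = S"
proof -
  define nxt where "nxt a = (LEAST s. s \<in> S \<and> a < s)" for a
  have nxt: "nxt a \<in> S" "a < nxt a" "\<And>s. s \<in> S \<Longrightarrow> a < s \<Longrightarrow> nxt a \<le> s" for a
  proof -
    obtain s0 where "s0 \<in> S" "a < s0" using unbounded by blast
    then obtain m where m: "m \<in> S" "a < m" "\<forall>t\<in>S. a < t \<longrightarrow> m \<le> t"
      using exists_least_if_finite_below[OF finite_below, of "{s\<in>S. a < s}" s0] by auto
    then have "nxt a = m" unfolding nxt_def by (intro Least_equality) auto
    then show "nxt a \<in> S" "a < nxt a" "\<And>s. s \<in> S \<Longrightarrow> a < s \<Longrightarrow> nxt a \<le> s" using m by auto
  qed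
  obtain s0 where "s0 \<in> S" using unbounded by blast
  then obtain m0 where m0: "\<forall>t\<in>S. m0 \<le> t" using exists_least_if_finite_below[OF finite_below] by blast
  define y where "y k = (nxt ^^ Suc k) (m0 - 1)" for k
  have y_Suc: "y (Suc k) = nxt (y k)" for k by (simp add: y_def)
  have y_in: "y k \<in> S" for k by (simp add: y_def nxt(1))
  have "strict_mono y" unfolding strict_mono_Suc_iff y_Suc by (simp add: nxt(2))
  moreover have "range y \<subseteq> S" using y_in by (simp add: image_subset_iff)
  moreover have "S \<subseteq> range y"
  proof
    fix s assume "s \<in> S"
    have "m0 - 1 < s" using m0 \<open>s \<in> S\<close> by fastforce
    then have "nxt (m0 - 1) \<le> s" by (rule nxt(3)[OF \<open>s \<in> S\<close>])
    then have "y 0 \<le> s" by (simp add: y_def)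
    moreover have "\<exists>k. s < y k"
      by (rule strict_mono_unbounded_if_finite_below[OF \<open>strict_mono y\<close> \<open>range y \<subseteq> S\<close> finite_below])
    ultimately obtain k where k: "y k \<le> s" "s < y (Suc k)" using exists_bracket_index by blast
    have "\<not> y k < s"
    proof
      assume "y k < s"
      then have "y (Suc k) \<le> s" unfolding y_Suc by (rule nxt(3)[OF \<open>s \<in> S\<close>])
      then show False using k(2) by simp
    qed
    then have "s = y k" using k(1) by simp
    then show "s \<in> range y" by simp
  qed
  ultimately show ?thesis by (intro exI[of _ y] conjI subset_antisym)
qed

section \<open>Derivatives of the finite Fourier transform\<close>

definition fin_fourier_deriv :: "real \<Rightarrow> (real \<Rightarrow> real) \<Rightarrow> nat \<Rightarrow> real \<Rightarrow> complex" where
  "fin_fourier_deriv c \<phi> k x =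
     integral {-1..1} (\<lambda>t. of_real (\<phi> t) * (\<i> * of_real (c * t)) ^ k * exp (\<i> * of_real (c * x * t)))"

lemma fin_fourier_deriv_0: "fin_fourier_deriv c \<phi> 0 = fin_fourier c \<phi>"
  by (simp add: fun_eq_iff fin_fourier_deriv_def fin_fourier_def)

lemma has_vector_derivative_fin_fourier_deriv:
  assumes "continuous_on {-1..1} \<phi>"
  shows "(fin_fourier_deriv c \<phi> k has_vector_derivative fin_fourier_deriv c \<phi> (Suc k) x) (at x)"
proof -
  define F where "F x t = of_real (\<phi> t) * (\<i> * of_real (c * t)) ^ k * exp (\<i> * of_real (c * x * t))"
    for x t
  define F' where "F' x t = of_real (\<phi> t) * (\<i> * of_real (c * t)) ^ Suc k * exp (\<i> * of_real (c * x * t))"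
    for x t
  have "((\<lambda>x. F x t) has_vector_derivative F' x t) (at x within UNIV)" for x t
  proof -
    have "((\<lambda>z. of_real (\<phi> t) * (\<i> * of_real (c * t)) ^ k * exp (\<i> * of_real (c * t) * z))
           has_field_derivative F' x t) (at (of_real x))"
      unfolding F'_def by (rule derivative_eq_intros refl)+ (simp add: algebra_simps)
    from has_vector_derivative_real_field[OF this] show ?thesis
      by (simp add: F_def algebra_simps)
  qed
  moreover have "F x integrable_on cbox (-1) 1" for x
    unfolding F_def cbox_interval
    by (intro integrable_continuous_interval continuous_intros continuous_on_compose2[OF assms]) auto
  moreover have "continuous_on (UNIV \<times> cbox (-1) 1) (\<lambda>(x, t). F' x t)"
    unfolding F'_def split_beta cbox_interval
    by (intro continuous_intros continuous_on_compose2[OF assms]) auto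
  ultimately have "((\<lambda>x. integral (cbox (-1) 1) (F x)) has_vector_derivative
      integral (cbox (-1) 1) (F' x)) (at x within UNIV)"
    by (intro leibniz_rule_vector_derivative) auto
  then show ?thesis unfolding fin_fourier_deriv_def F_def F'_def cbox_interval by simp
qed

lemma fin_fourier_deriv_at_0:
  assumes "continuous_on {-1..1} \<phi>"
  shows "fin_fourier_deriv c \<phi> k 0 = (\<i> * of_real c) ^ k * of_real (integral {-1..1} (\<lambda>t. \<phi> t * t ^ k))"
proof -
  have "(\<lambda>t. \<phi> t * t ^ k) integrable_on {-1..1}"
    by (intro integrable_continuous_interval continuous_intros assms)
  then have "integral {-1..1} (\<lambda>t. of_real (\<phi> t * t ^ k)) = (of_real (integral {-1..1} (\<lambda>t. \<phi> t * t ^ k)) :: complex)"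
    by (intro integral_unique has_integral_of_real) auto
  moreover have "(\<lambda>t. of_real (\<phi> t) * (\<i> * of_real (c * t)) ^ k * exp (\<i> * of_real (c * 0 * t))) =
      (\<lambda>t. (\<i> * of_real c) ^ k * of_real (\<phi> t * t ^ k))"
    by (simp add: fun_eq_iff power_mult_distrib mult_ac)
  ultimately show ?thesis by (simp add: fin_fourier_deriv_def)
qed

lemma moments_eq_0_if_fin_fourier_eq_0:
  assumes "continuous_on {-1..1} \<phi>" "c \<noteq> 0" "\<And>x. fin_fourier c \<phi> x = 0"
  shows "integral {-1..1} (\<lambda>t. \<phi> t * t ^ k) = 0"
proof -
  have "fin_fourier_deriv c \<phi> k = (\<lambda>x. 0)"
  proof (induction k)
    case 0
    then show ?case using assms(3) by (simp add: fin_fourier_deriv_0 fun_eq_iff)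
  next
    case (Suc k)
    have "fin_fourier_deriv c \<phi> (Suc k) x = 0" for x
      using vector_derivative_unique_at[OF has_vector_derivative_fin_fourier_deriv[OF assms(1)]]
        Suc.IH has_vector_derivative_const by metis
    then show ?case by auto
  qed
  then show ?thesis using fin_fourier_deriv_at_0[OF assms(1), of c k] assms(2) by simp
qed

lemma integral_mult_polynomial_eq_0_if_moments_eq_0:
  fixes \<phi> :: "real \<Rightarrow> real"
  assumes cont: "continuous_on {-1..1} \<phi>" and moments: "\<And>k. integral {-1..1} (\<lambda>t. \<phi> t * t ^ k) = 0"
    and "real_polynomial_function g"
  shows "integral {-1..1} (\<lambda>t. \<phi> t * g t) = 0"
proof -
  obtain a n where g_sum: "g = (\<lambda>t. \<Sum>i\<le>n. a i * t ^ i)"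
    using assms(3) real_polynomial_function_iff_sum by blast
  have "integral {-1..1} (\<lambda>t. \<phi> t * g t) = integral {-1..1} (\<lambda>t. \<Sum>i\<le>n. a i * (\<phi> t * t ^ i))"
    unfolding g_sum by (simp add: sum_distrib_left mult_ac)
  also have "\<dots> = (\<Sum>i\<le>n. a i * integral {-1..1} (\<lambda>t. \<phi> t * t ^ i))"
    by (subst integral_sum) (auto intro!: integrable_continuous_interval continuous_intros cont)
  finally show ?thesis by (simp add: moments)
qed

lemma integral_square_eq_0_if_moments_eq_0:
  fixes \<phi> :: "real \<Rightarrow> real"
  assumes cont: "continuous_on {-1..1} \<phi>" and moments: "\<And>k. integral {-1..1} (\<lambda>t. \<phi> t * t ^ k) = 0"
  shows "integral {-1..1} (\<lambda>t. \<phi> t * \<phi> t) = 0"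
proof -
  obtain M where M: "M > 0" "\<And>t. t \<in> {-1..1} \<Longrightarrow> \<bar>\<phi> t\<bar> \<le> M"
    using compact_imp_bounded[OF compact_continuous_image[OF cont compact_Icc]]
    unfolding bounded_pos by auto
  have bound: "\<bar>integral {-1..1} (\<lambda>t. \<phi> t * \<phi> t)\<bar> \<le> 2 * M * e" if "e > 0" for e
  proof -
    obtain g where g: "real_polynomial_function g" "\<And>t. t \<in> {-1..1} \<Longrightarrow> \<bar>\<phi> t - g t\<bar> < e"
      using Stone_Weierstrass_real_polynomial_function[OF compact_Icc cont \<open>e > 0\<close>] by blast
    have "integral {-1..1} (\<lambda>t. \<phi> t * g t) = 0"
      using integral_mult_polynomial_eq_0_if_moments_eq_0[OF cont moments g(1)] .
    moreover have "continuous_on {-1..1} g"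
      using continuous_real_polymonial_function[OF g(1)] by (simp add: continuous_at_imp_continuous_on)
    moreover have "integral {-1..1} (\<lambda>t. \<phi> t * (\<phi> t - g t)) =
        integral {-1..1} (\<lambda>t. \<phi> t * \<phi> t) - integral {-1..1} (\<lambda>t. \<phi> t * g t)"
      unfolding right_diff_distrib
      by (intro integral_diff integrable_continuous_interval continuous_intros cont
          \<open>continuous_on {-1..1} g\<close>)
    ultimately have "integral {-1..1} (\<lambda>t. \<phi> t * \<phi> t) = integral {-1..1} (\<lambda>t. \<phi> t * (\<phi> t - g t))"
      by simp
    moreover have "norm (integral {-1..1} (\<lambda>t. \<phi> t * (\<phi> t - g t))) \<le> (M * e) * Henstock_Kurzweil_Integration.content (cbox (-1::real) 1)"
    proof (rule has_integral_bound)
      show "((\<lambda>t. \<phi> t * (\<phi> t - g t)) has_integral integral {-1..1} (\<lambda>t. \<phi> t * (\<phi> t - g t))) (cbox (-1) 1)"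
        unfolding cbox_interval
        by (intro integrable_integral integrable_continuous_interval continuous_intros cont
            \<open>continuous_on {-1..1} g\<close>)
      show "norm (\<phi> t * (\<phi> t - g t)) \<le> M * e" if "t \<in> cbox (-1) 1" for t
        using M(2)[of t] g(2)[of t] that
        by (auto simp: abs_mult cbox_interval intro!: mult_mono)
    qed (use M \<open>e > 0\<close> in simp)
    ultimately show ?thesis by (simp add: cbox_interval)
  qed
  show ?thesis
  proof (rule ccontr)
    assume nonzero: "integral {-1..1} (\<lambda>t. \<phi> t * \<phi> t) \<noteq> 0"
    have "\<bar>integral {-1..1} (\<lambda>t. \<phi> t * \<phi> t)\<bar> \<le> \<bar>integral {-1..1} (\<lambda>t. \<phi> t * \<phi> t)\<bar> / 2"
      using bound[of "\<bar>integral {-1..1} (\<lambda>t. \<phi> t * \<phi> t)\<bar> / (4 * M)"] nonzero M(1) by simp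
    with nonzero show False by simp
  qed
qed

lemma fin_fourier_eigenfunction_derivatives:
  assumes cont: "continuous_on {-1..1} \<phi>" and "lam \<noteq> 0"
    and eigen: "\<And>x. lam * of_real (\<phi> x) = fin_fourier c \<phi> x"
  shows "(\<phi> has_real_derivative deriv \<phi> x) (at x)"
    and "(deriv \<phi> has_real_derivative deriv (deriv \<phi>) x) (at x)"
proof -
  define D where "D k x = Re (fin_fourier_deriv c \<phi> k x / lam)" for k x
  have D_deriv: "(D k has_real_derivative D (Suc k) x) (at x)" for k x
    unfolding D_def
    by (intro has_field_derivative_Re has_vector_derivative_divide
        has_vector_derivative_fin_fourier_deriv cont)
  have "fin_fourier c \<phi> x / lam = of_real (\<phi> x)" for x
    using \<open>lam \<noteq> 0\<close> by (simp add: eigen[symmetric])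
  then have "\<phi> = D 0" by (simp add: fun_eq_iff D_def fin_fourier_deriv_0)
  moreover have "deriv (D k) = D (Suc k)" for k
    by (rule ext) (rule DERIV_imp_deriv[OF D_deriv])
  ultimately show "(\<phi> has_real_derivative deriv \<phi> x) (at x)"
    and "(deriv \<phi> has_real_derivative deriv (deriv \<phi>) x) (at x)"
    using D_deriv by simp_all
qed

section \<open>The prolate differential equation\<close>

lemma picone_inequality:
  fixes v v' p r y y' P Q :: real
  assumes "y \<noteq> 0" "0 \<le> p" "p \<le> P" "r \<le> - Q"
  shows "2 * v * v' * p * y' / y + r * v\<^sup>2 - p * v\<^sup>2 * y'\<^sup>2 / y\<^sup>2 \<le> P * v'\<^sup>2 - Q * v\<^sup>2"
proof -
  have "2 * v * v' * p * y' / y + r * v\<^sup>2 - p * v\<^sup>2 * y'\<^sup>2 / y\<^sup>2 = p * v'\<^sup>2 + r * v\<^sup>2 - p * (v' - v * y' / y)\<^sup>2"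
    using assms(1) by (simp add: field_simps power2_eq_square)
  also have "\<dots> \<le> P * v'\<^sup>2 - Q * v\<^sup>2"
    using mult_right_mono[OF assms(3) zero_le_power2[of v']] mult_right_mono[OF assms(4) zero_le_power2[of v]]
      mult_nonneg_nonneg[OF assms(2) zero_le_power2[of "v' - v * y' / y"]] by linarith
  finally show ?thesis .
qed

lemma sq_add_3pi_lt:
  fixes T w :: real
  assumes "0 \<le> w" "3 * pi + 2 * w \<le> T"
  shows "(T + 3 * pi)\<^sup>2 < 9 * (T\<^sup>2 - w\<^sup>2)"
proof -
  have "0 \<le> T + 3 * pi" "T + 3 * pi \<le> 2 * T - 2 * w" "2 * w < T"
    using assms pi_gt_zero by linarith+
  then have "(T + 3 * pi)\<^sup>2 \<le> (2 * T - 2 * w)\<^sup>2" by (intro power_mono)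
  also have "\<dots> < 9 * (T\<^sup>2 - w\<^sup>2)"
  proof -
    have "(2 * w)\<^sup>2 < T\<^sup>2" using \<open>2 * w < T\<close> assms(1) by (intro power_strict_mono) auto
    then have "4 * w\<^sup>2 < T\<^sup>2" by (simp add: power_mult_distrib)
    moreover have "0 \<le> T * w" using \<open>2 * w < T\<close> assms(1) by simp
    moreover have "9 * (T\<^sup>2 - w\<^sup>2) - (2 * T - 2 * w)\<^sup>2 = 5 * T\<^sup>2 + 8 * (T * w) - 13 * w\<^sup>2"
      by (simp add: power2_eq_square algebra_simps)
    ultimately show ?thesis using zero_le_power2[of w] by linarith
  qed
  finally show ?thesis .
qed

lemma cos_sq_sin_sq_antiderivative:
  fixes a P Q \<alpha> :: real
  assumes "a \<noteq> 0"
  shows "((\<lambda>t. (P * a\<^sup>2 - Q) / 2 * t + (P * a\<^sup>2 + Q) / (4 * a) * sin (2 * (a * (t - \<alpha>))))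
    has_real_derivative P * (a * cos (a * (t - \<alpha>)))\<^sup>2 - Q * (sin (a * (t - \<alpha>)))\<^sup>2) (at t)"
proof -
  have trig: "(P * a\<^sup>2 - Q) / 2 + (P * a\<^sup>2 + Q) / (4 * a) * (cos (2 * \<theta>) * (2 * a))
      = P * (a * cos \<theta>)\<^sup>2 - Q * (sin \<theta>)\<^sup>2" for \<theta>
    unfolding cos_double sin_squared_eq using assms by (simp add: field_simps power2_eq_square)
  have "((\<lambda>t. (P * a\<^sup>2 - Q) / 2 * t + (P * a\<^sup>2 + Q) / (4 * a) * sin (2 * (a * (t - \<alpha>))))
      has_real_derivative
        (P * a\<^sup>2 - Q) / 2 + (P * a\<^sup>2 + Q) / (4 * a) * (cos (2 * (a * (t - \<alpha>))) * (2 * a))) (at t)"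
    by (rule derivative_eq_intros refl)+ simp
  then show ?thesis by (simp only: trig)
qed

locale prolate_solution =
  fixes c chi :: real and f f' f'' :: "real \<Rightarrow> real"
  assumes c_pos: "c > 0" and chi_gt: "chi > c\<^sup>2"
    and f_deriv: "\<And>x. (f has_real_derivative f' x) (at x)"
    and f'_deriv: "\<And>x. (f' has_real_derivative f'' x) (at x)"
    and ode: "\<And>x. (1 - x\<^sup>2) * f'' x - 2 * x * f' x + (chi - c\<^sup>2 * x\<^sup>2) * f x = 0"
begin

lemma chi_pos: "chi > 0"
  using chi_gt by (smt (verit) zero_le_power2)

lemma continuous_on_f: "continuous_on S f"
  using f_deriv by (meson DERIV_isCont continuous_at_imp_continuous_on)

lemma continuous_on_f': "continuous_on S f'"
  using f'_deriv by (meson DERIV_isCont continuous_at_imp_continuous_on)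

lemma potential_pos: "x\<^sup>2 \<le> 1 \<Longrightarrow> chi - c\<^sup>2 * x\<^sup>2 > 0"
  using chi_gt mult_left_le[of "x\<^sup>2" "c\<^sup>2"] by simp

lemma flux_deriv: "((\<lambda>t. (t\<^sup>2 - 1) * f' t) has_real_derivative (chi - c\<^sup>2 * t\<^sup>2) * f t) (at t)"
proof -
  have "(1 - t\<^sup>2) * f'' t = 2 * t * f' t - (chi - c\<^sup>2 * t\<^sup>2) * f t" using ode[of t] by linarith
  then show ?thesis
    by (auto intro!: derivative_eq_intros f'_deriv simp: algebra_simps power2_eq_square)
qed

lemma rolle: "a < b \<Longrightarrow> f a = f b \<Longrightarrow> \<exists>z. a < z \<and> z < b \<and> f' z = 0"
  using MVT2[of a b f f'] f_deriv by force

definition energy :: "real \<Rightarrow> real" where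
  "energy t = ((t\<^sup>2 - 1) * f' t)\<^sup>2 + (1 - t\<^sup>2) * (chi - c\<^sup>2 * t\<^sup>2) * (f t)\<^sup>2"

lemma energy_deriv:
  "(energy has_real_derivative 2 * t * (2 * c\<^sup>2 * t\<^sup>2 - c\<^sup>2 - chi) * (f t)\<^sup>2) (at t)"
  unfolding energy_def
  by (rule derivative_eq_intros flux_deriv f_deriv refl)+ (simp add: algebra_simps power2_eq_square)

text \<open>On \<open>|t| < 1\<close> this is the energy divided by \<open>(1 - t\<^sup>2) (chi - c\<^sup>2 t\<^sup>2)\<close>.\<close>
definition inner_energy :: "real \<Rightarrow> real" where
  "inner_energy t = (f t)\<^sup>2 + (1 - t\<^sup>2) * (f' t)\<^sup>2 / (chi - c\<^sup>2 * t\<^sup>2)"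

lemma inner_energy_deriv:
  assumes "t\<^sup>2 \<le> 1"
  shows "(inner_energy has_real_derivative
    2 * t * (f' t)\<^sup>2 / (chi - c\<^sup>2 * t\<^sup>2) + 2 * c\<^sup>2 * t * (1 - t\<^sup>2) * (f' t)\<^sup>2 / (chi - c\<^sup>2 * t\<^sup>2)\<^sup>2) (at t)"
proof -
  define r where "r = chi - c\<^sup>2 * t\<^sup>2"
  have "r \<noteq> 0" using potential_pos[OF assms] by (simp add: r_def)
  have "(1 - t\<^sup>2) * f'' t = 2 * t * f' t - r * f t" using ode[of t] by (simp add: r_def)
  have numerator: "((\<lambda>t. (1 - t\<^sup>2) * (f' t)\<^sup>2) has_real_derivative 2 * t * (f' t)\<^sup>2 - 2 * r * f t * f' t) (at t)"
    by (rule derivative_eq_intros refl f'_deriv)+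
      (simp add: power2_eq_square, insert \<open>(1 - t\<^sup>2) * f'' t = 2 * t * f' t - r * f t\<close>, algebra)
  have denominator: "((\<lambda>t. chi - c\<^sup>2 * t\<^sup>2) has_real_derivative - 2 * c\<^sup>2 * t) (at t)"
    by (rule derivative_eq_intros refl)+ simp
  have square: "((\<lambda>t. (f t)\<^sup>2) has_real_derivative 2 * f t * f' t) (at t)"
    by (rule derivative_eq_intros refl f_deriv)+ simp
  have "(inner_energy has_real_derivative 2 * f t * f' t +
      ((2 * t * (f' t)\<^sup>2 - 2 * r * f t * f' t) * r - - 2 * c\<^sup>2 * t * ((1 - t\<^sup>2) * (f' t)\<^sup>2)) / r\<^sup>2) (at t)"
    unfolding inner_energy_def r_def
    using DERIV_add[OF square DERIV_quotient[OF numerator denominator]] \<open>r \<noteq> 0\<close>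
    by (simp add: r_def power2_eq_square)
  then show ?thesis
    using \<open>r \<noteq> 0\<close> unfolding r_def[symmetric] by (simp add: field_simps power2_eq_square)
qed

lemma inner_energy_mono:
  assumes "0 \<le> s" "s \<le> t" "t \<le> 1"
  shows "inner_energy s \<le> inner_energy t"
proof (rule DERIV_nonneg_imp_nondecreasing[OF assms(2)])
  fix x assume x: "s \<le> x" "x \<le> t"
  then have "x\<^sup>2 \<le> 1" "0 \<le> x" using assms by (auto simp: power_le_one)
  then have "0 \<le> 2 * x * (f' x)\<^sup>2 / (chi - c\<^sup>2 * x\<^sup>2) +
      2 * c\<^sup>2 * x * (1 - x\<^sup>2) * (f' x)\<^sup>2 / (chi - c\<^sup>2 * x\<^sup>2)\<^sup>2"
    using potential_pos[of x] by (intro add_nonneg_nonneg divide_nonneg_nonneg mult_nonneg_nonneg) auto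
  then show "\<exists>d. (inner_energy has_real_derivative d) (at x) \<and> 0 \<le> d"
    using inner_energy_deriv[OF \<open>x\<^sup>2 \<le> 1\<close>] by blast
qed

lemma vanishing_on_right_half:
  assumes "f 1 = 0" "0 \<le> t" "t < 1"
  shows "f t = 0" "f' t = 0"
proof -
  have "0 < chi - c\<^sup>2 * t\<^sup>2" "0 < 1 - t\<^sup>2"
    using potential_pos[of t] assms(2,3) by (simp_all add: power_le_one abs_square_less_1)
  then have weighted: "0 \<le> (1 - t\<^sup>2) * (f' t)\<^sup>2 / (chi - c\<^sup>2 * t\<^sup>2)" by simp
  have "inner_energy t \<le> 0" using inner_energy_mono[of t 1] assms by (simp add: inner_energy_def)
  then have "(f t)\<^sup>2 = 0" "(1 - t\<^sup>2) * (f' t)\<^sup>2 / (chi - c\<^sup>2 * t\<^sup>2) = 0"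
    using weighted zero_le_power2[of "f t"] unfolding inner_energy_def by linarith+
  then show "f t = 0" "f' t = 0"
    using \<open>0 < 1 - t\<^sup>2\<close> \<open>0 < chi - c\<^sup>2 * t\<^sup>2\<close> by simp_all
qed

lemma vanishing_on_unit_interval:
  assumes "f 1 = 0" "-1 < t" "t < 1"
  shows "f t = 0"
proof (cases "0 \<le> t")
  case True
  then show ?thesis using vanishing_on_right_half assms by blast
next
  case False
  have "energy t \<le> energy 0"
  proof (rule DERIV_nonneg_imp_nondecreasing[of t 0 energy])
    fix x assume x: "t \<le> x" "x \<le> 0"
    then have "\<bar>x\<bar> \<le> 1" using assms(2) by simp
    then have "x\<^sup>2 \<le> 1" by (simp add: abs_square_le_1)
    then have "2 * c\<^sup>2 * x\<^sup>2 - c\<^sup>2 - chi \<le> 0"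
      using chi_gt mult_left_le[of "x\<^sup>2" "c\<^sup>2"] by simp
    then have "0 \<le> 2 * x * (2 * c\<^sup>2 * x\<^sup>2 - c\<^sup>2 - chi) * (f x)\<^sup>2"
      using x by (simp add: mult_nonpos_nonpos)
    then show "\<exists>d. (energy has_real_derivative d) (at x) \<and> 0 \<le> d" using energy_deriv by blast
  qed (use False in simp)
  also have "energy 0 = 0"
    using vanishing_on_right_half[OF assms(1), of 0] by (simp add: energy_def)
  finally have "(1 - t\<^sup>2) * (chi - c\<^sup>2 * t\<^sup>2) * (f t)\<^sup>2 \<le> 0"
    unfolding energy_def by (smt (verit) zero_le_power2)
  moreover have "t\<^sup>2 < 1" using assms(2,3) by (simp add: abs_square_less_1 abs_less_iff)
  then have "0 < (1 - t\<^sup>2) * (chi - c\<^sup>2 * t\<^sup>2)" using potential_pos[of t] by simp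
  ultimately have "(f t)\<^sup>2 \<le> 0"
    using mult_le_cancel_left_pos[of "(1 - t\<^sup>2) * (chi - c\<^sup>2 * t\<^sup>2)" "(f t)\<^sup>2" 0] by simp
  then show ?thesis by simp
qed

lemma integral_square_eq_0_if_vanishes_at_1:
  assumes "f 1 = 0"
  shows "integral {-1..1} (\<lambda>t. f t * f t) = 0"
proof -
  have "integral {-1..1} (\<lambda>t. f t * f t) = integral {-1<..<1} (\<lambda>t. f t * f t)"
    by (rule integral_open_interval_real)
  also have "\<dots> = integral {-1<..<1} (\<lambda>t::real. 0)"
    by (rule Henstock_Kurzweil_Integration.integral_cong) (use vanishing_on_unit_interval[OF assms] in auto)
  finally show ?thesis by simp
qed

lemma picone_quotient_deriv:
  assumes "f t \<noteq> 0" "(v has_real_derivative v') (at t)"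
  shows "((\<lambda>t. (v t)\<^sup>2 * ((t\<^sup>2 - 1) * f' t) / f t) has_real_derivative
    2 * v t * v' * (t\<^sup>2 - 1) * f' t / f t + (chi - c\<^sup>2 * t\<^sup>2) * (v t)\<^sup>2
      - (t\<^sup>2 - 1) * (v t)\<^sup>2 * (f' t)\<^sup>2 / (f t)\<^sup>2) (at t)"
proof -
  define p where "p = t\<^sup>2 - 1"
  define r where "r = chi - c\<^sup>2 * t\<^sup>2"
  have "((\<lambda>t. (v t)\<^sup>2) has_real_derivative 2 * v t * v') (at t)"
    by (rule derivative_eq_intros assms(2) refl)+ simp
  from DERIV_quotient[OF DERIV_mult[OF this flux_deriv] f_deriv assms(1)]
  have "((\<lambda>t. (v t)\<^sup>2 * ((t\<^sup>2 - 1) * f' t) / f t) has_real_derivative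
      ((2 * v t * v' * (p * f' t) + r * f t * (v t)\<^sup>2) * f t - f' t * ((v t)\<^sup>2 * (p * f' t))) / (f t)\<^sup>2) (at t)"
    unfolding p_def r_def by (simp only: numeral_2_eq_2)
  moreover have "((2 * v t * v' * (p * f' t) + r * f t * (v t)\<^sup>2) * f t - f' t * ((v t)\<^sup>2 * (p * f' t))) / (f t)\<^sup>2
      = 2 * v t * v' * p * f' t / f t + r * (v t)\<^sup>2 - p * (v t)\<^sup>2 * (f' t)\<^sup>2 / (f t)\<^sup>2"
    using assms(1) by (simp add: field_simps power2_eq_square)
  ultimately show ?thesis by (simp add: p_def r_def)
qed

text \<open>Sturm comparison with \<open>sin (a (t - \<alpha>))\<close>: if \<open>f\<close> had no zero on the half period, Picone's
  identity would make \<open>H - W\<close> below nondecreasing there, while \<open>W\<close> vanishes at both ends and \<open>H\<close>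
  decreases.\<close>
lemma zero_in_interval:
  assumes "1 \<le> \<alpha>" "a > 0" and gap: "(\<alpha> + pi / a)\<^sup>2 * a\<^sup>2 < c\<^sup>2 * \<alpha>\<^sup>2 - chi"
  shows "\<exists>z. \<alpha> \<le> z \<and> z \<le> \<alpha> + pi / a \<and> f z = 0"
proof (rule ccontr)
  define \<beta> where "\<beta> = \<alpha> + pi / a"
  define P where "P = \<beta>\<^sup>2"
  define Q where "Q = c\<^sup>2 * \<alpha>\<^sup>2 - chi"
  define v where "v t = sin (a * (t - \<alpha>))" for t
  define W where "W t = (v t)\<^sup>2 * ((t\<^sup>2 - 1) * f' t) / f t" for t
  define H where "H t = (P * a\<^sup>2 - Q) / 2 * t + (P * a\<^sup>2 + Q) / (4 * a) * sin (2 * (a * (t - \<alpha>)))" for t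
  assume "\<nexists>z. \<alpha> \<le> z \<and> z \<le> \<alpha> + pi / a \<and> f z = 0"
  then have nonzero: "f t \<noteq> 0" if "\<alpha> \<le> t" "t \<le> \<beta>" for t
    using that by (auto simp: \<beta>_def)
  have "\<alpha> < \<beta>" using \<open>a > 0\<close> by (simp add: \<beta>_def)
  have "H \<alpha> - W \<alpha> \<le> H \<beta> - W \<beta>"
  proof (rule DERIV_nonneg_imp_nondecreasing[of \<alpha> \<beta> "\<lambda>t. H t - W t"])
    fix t assume t: "\<alpha> \<le> t" "t \<le> \<beta>"
    have "(v has_real_derivative a * cos (a * (t - \<alpha>))) (at t)"
      unfolding v_def by (rule derivative_eq_intros refl)+ simp
    from DERIV_diff[OF cos_sq_sin_sq_antiderivative picone_quotient_deriv[OF nonzero[OF t] this]]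
    have "((\<lambda>t. H t - W t) has_real_derivative
        P * (a * cos (a * (t - \<alpha>)))\<^sup>2 - Q * (v t)\<^sup>2
        - (2 * v t * (a * cos (a * (t - \<alpha>))) * (t\<^sup>2 - 1) * f' t / f t + (chi - c\<^sup>2 * t\<^sup>2) * (v t)\<^sup>2
          - (t\<^sup>2 - 1) * (v t)\<^sup>2 * (f' t)\<^sup>2 / (f t)\<^sup>2)) (at t)"
      using \<open>a > 0\<close> unfolding H_def W_def v_def by simp
    moreover have "2 * v t * (a * cos (a * (t - \<alpha>))) * (t\<^sup>2 - 1) * f' t / f t + (chi - c\<^sup>2 * t\<^sup>2) * (v t)\<^sup>2
        - (t\<^sup>2 - 1) * (v t)\<^sup>2 * (f' t)\<^sup>2 / (f t)\<^sup>2 \<le> P * (a * cos (a * (t - \<alpha>)))\<^sup>2 - Q * (v t)\<^sup>2"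
    proof (rule picone_inequality[OF nonzero[OF t]])
      show "0 \<le> t\<^sup>2 - 1" using t assms(1) by (simp add: one_le_power)
      have "t\<^sup>2 \<le> \<beta>\<^sup>2" using t assms(1) by (intro power_mono) auto
      then show "t\<^sup>2 - 1 \<le> P" by (simp add: P_def)
      have "\<alpha>\<^sup>2 \<le> t\<^sup>2" using t assms(1) by (intro power_mono) auto
      then show "chi - c\<^sup>2 * t\<^sup>2 \<le> - Q" using mult_left_mono[of "\<alpha>\<^sup>2" "t\<^sup>2" "c\<^sup>2"] by (simp add: Q_def)
    qed
    ultimately show "\<exists>d. ((\<lambda>t. H t - W t) has_real_derivative d) (at t) \<and> 0 \<le> d"
      by (intro exI conjI) (assumption, simp)
  qed (use \<open>\<alpha> < \<beta>\<close> in simp)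
  moreover have "a * (\<beta> - \<alpha>) = pi" using \<open>a > 0\<close> by (simp add: \<beta>_def)
  then have "W \<alpha> = 0" "W \<beta> = 0" "H \<beta> - H \<alpha> = (P * a\<^sup>2 - Q) / 2 * (\<beta> - \<alpha>)"
    by (simp_all add: W_def H_def v_def right_diff_distrib)
  ultimately have "0 \<le> (P * a\<^sup>2 - Q) / 2 * (\<beta> - \<alpha>)" by simp
  moreover have "P * a\<^sup>2 < Q" using gap by (simp add: P_def Q_def \<beta>_def)
  ultimately show False using \<open>\<alpha> < \<beta>\<close> by (simp add: zero_le_mult_iff)
qed

lemma oscillation: "\<exists>z>b. f z = 0"
proof -
  define \<alpha> where "\<alpha> = max b 1 + (3 * pi + 2 * sqrt chi) / c"
  have "0 < (3 * pi + 2 * sqrt chi) / c" using c_pos chi_pos by (simp add: add_pos_nonneg)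
  then have "b < \<alpha>" "1 \<le> \<alpha>" by (simp_all add: \<alpha>_def)
  have "c * \<alpha> = c * max b 1 + (3 * pi + 2 * sqrt chi)"
    using c_pos by (simp add: \<alpha>_def field_simps)
  then have "3 * pi + 2 * sqrt chi \<le> c * \<alpha>" using c_pos by simp
  from sq_add_3pi_lt[OF _ this] chi_pos have "(c * \<alpha> + 3 * pi)\<^sup>2 < 9 * ((c * \<alpha>)\<^sup>2 - chi)"
    by simp
  moreover have "(\<alpha> + pi / (c / 3))\<^sup>2 * (c / 3)\<^sup>2 = (c * \<alpha> + 3 * pi)\<^sup>2 / 9"
    using c_pos by (simp add: field_simps power2_eq_square)
  ultimately have "(\<alpha> + pi / (c / 3))\<^sup>2 * (c / 3)\<^sup>2 < c\<^sup>2 * \<alpha>\<^sup>2 - chi"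
    by (simp add: power_mult_distrib)
  then obtain z where "\<alpha> \<le> z" "f z = 0"
    using zero_in_interval[OF \<open>1 \<le> \<alpha>\<close>, of "c / 3"] c_pos by auto
  then show ?thesis using \<open>b < \<alpha>\<close> by (intro exI[of _ z]) simp
qed

text \<open>The zero of \<open>chi - c\<^sup>2 t\<^sup>2\<close>: below it solutions are monotone on \<open>[1, \<infinity>)\<close>, beyond it they oscillate.\<close>
definition turning_point :: real where
  "turning_point = sqrt chi / c"

lemma c_sq_turning_point_sq: "c\<^sup>2 * turning_point\<^sup>2 = chi"
  using c_pos chi_pos by (simp add: turning_point_def power_divide)

lemma turning_point_gt_1: "1 < turning_point"
proof -
  have "sqrt (c\<^sup>2) < sqrt chi" using chi_gt by (simp only: real_sqrt_less_iff)
  then show ?thesis using c_pos by (simp add: turning_point_def)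
qed

lemma potential_pos_below_turning_point: "0 \<le> t \<Longrightarrow> t < turning_point \<Longrightarrow> 0 < chi - c\<^sup>2 * t\<^sup>2"
  using c_pos power_strict_mono[of t turning_point 2] c_sq_turning_point_sq
    mult_strict_left_mono[of "t\<^sup>2" "turning_point\<^sup>2" "c\<^sup>2"] by simp

lemma potential_neg_above_turning_point: "turning_point < t \<Longrightarrow> chi - c\<^sup>2 * t\<^sup>2 < 0"
  using c_pos turning_point_gt_1 power_strict_mono[of turning_point t 2] c_sq_turning_point_sq
    mult_strict_left_mono[of "turning_point\<^sup>2" "t\<^sup>2" "c\<^sup>2"] by simp

lemma potential_nonneg_below_turning_point: "0 \<le> t \<Longrightarrow> t \<le> turning_point \<Longrightarrow> 0 \<le> chi - c\<^sup>2 * t\<^sup>2"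
  using power_mono[of t turning_point 2] mult_left_mono[of "t\<^sup>2" "turning_point\<^sup>2" "c\<^sup>2"]
    c_sq_turning_point_sq by simp

lemma potential_nonpos_above_turning_point: "turning_point \<le> t \<Longrightarrow> chi - c\<^sup>2 * t\<^sup>2 \<le> 0"
  using turning_point_gt_1 power_mono[of turning_point t 2]
    mult_left_mono[of "turning_point\<^sup>2" "t\<^sup>2" "c\<^sup>2"] c_sq_turning_point_sq by simp

lemma energy_mono_above_turning_point:
  assumes "turning_point \<le> s" "s \<le> t"
  shows "energy s \<le> energy t"
proof (rule DERIV_nonneg_imp_nondecreasing[of s t energy])
  fix x assume x: "s \<le> x" "x \<le> t"
  then have "1 \<le> x" "chi \<le> c\<^sup>2 * x\<^sup>2"
    using assms turning_point_gt_1 potential_nonpos_above_turning_point[of x] by simp_all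
  then have "c\<^sup>2 \<le> c\<^sup>2 * x\<^sup>2" using mult_left_mono[of 1 "x\<^sup>2" "c\<^sup>2"] by (simp add: one_le_power)
  with \<open>1 \<le> x\<close> \<open>chi \<le> c\<^sup>2 * x\<^sup>2\<close> have "0 \<le> 2 * x * (2 * c\<^sup>2 * x\<^sup>2 - c\<^sup>2 - chi) * (f x)\<^sup>2" by simp
  then show "\<exists>d. (energy has_real_derivative d) (at x) \<and> 0 \<le> d" using energy_deriv by blast
qed (use assms in simp)

end

section \<open>Zeros and critical points beyond 1\<close>

locale prolate_solution_pos = prolate_solution +
  assumes f_1_pos: "f 1 > 0"
begin

lemma f'_1_pos: "f' 1 > 0"
proof -
  have "f' 1 = (chi - c\<^sup>2) * f 1 / 2" using ode[of 1] by simp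
  moreover have "0 < (chi - c\<^sup>2) * f 1" using f_1_pos chi_gt by simp
  ultimately show ?thesis by simp
qed

lemma flux_product_deriv:
  "((\<lambda>t. (t\<^sup>2 - 1) * f' t * f t) has_real_derivative (chi - c\<^sup>2 * t\<^sup>2) * (f t)\<^sup>2 + (t\<^sup>2 - 1) * (f' t)\<^sup>2) (at t)"
  by (rule DERIV_cong[OF DERIV_mult[OF flux_deriv f_deriv]]) (simp add: power2_eq_square algebra_simps)

lemma f_f'_nonneg_below_turning_point:
  assumes "1 \<le> t" "t \<le> turning_point"
  shows "0 \<le> f t * f' t"
proof (cases "t = 1")
  case True
  then show ?thesis using f_1_pos f'_1_pos by simp
next
  case False
  then have "1 < t" using assms(1) by simp
  have "(1\<^sup>2 - 1) * f' 1 * f 1 \<le> (t\<^sup>2 - 1) * f' t * f t"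
  proof (rule DERIV_nonneg_imp_nondecreasing[OF assms(1)])
    fix x assume "1 \<le> x" "x \<le> t"
    then have "0 \<le> chi - c\<^sup>2 * x\<^sup>2" "0 \<le> x\<^sup>2 - 1"
      using assms(2) potential_nonneg_below_turning_point[of x] by (simp_all add: one_le_power)
    then show "\<exists>d. ((\<lambda>t. (t\<^sup>2 - 1) * f' t * f t) has_real_derivative d) (at x) \<and> 0 \<le> d"
      using flux_product_deriv by (intro exI conjI) auto
  qed
  then have "0 \<le> (t\<^sup>2 - 1) * (f t * f' t)" by (simp add: mult_ac)
  moreover have "0 < t\<^sup>2 - 1" using \<open>1 < t\<close> by (simp add: one_less_power)
  ultimately show ?thesis by (simp add: zero_le_mult_iff)
qed

lemma f_pos_below_turning_point:
  assumes "1 \<le> t" "t \<le> turning_point"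
  shows "0 < f t"
proof -
  have nonzero: "f s \<noteq> 0" if "s \<in> {1..t}" for s
  proof -
    have "(f 1)\<^sup>2 \<le> (f s)\<^sup>2"
    proof (rule DERIV_nonneg_imp_nondecreasing[of 1 s "\<lambda>s. (f s)\<^sup>2"])
      fix x assume "1 \<le> x" "x \<le> s"
      then have "0 \<le> 2 * (f x * f' x)"
        using that assms f_f'_nonneg_below_turning_point[of x] by simp
      moreover have "((\<lambda>s. (f s)\<^sup>2) has_real_derivative 2 * (f x * f' x)) (at x)"
        by (rule derivative_eq_intros refl f_deriv)+ simp
      ultimately show "\<exists>d. ((\<lambda>s. (f s)\<^sup>2) has_real_derivative d) (at x) \<and> 0 \<le> d" by blast
    qed (use that in simp)
    then show ?thesis using f_1_pos by auto
  qed
  have "0 < f 1 * f t" by (rule nonzero_imp_same_sign[OF assms(1) continuous_on_f nonzero])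
  then show ?thesis using f_1_pos by (simp add: zero_less_mult_iff)
qed

lemma f'_pos_below_turning_point:
  assumes "1 \<le> t" "t \<le> turning_point"
  shows "0 < f' t"
proof (cases "t = 1")
  case True
  then show ?thesis using f'_1_pos by simp
next
  case False
  then have "1 < t" using assms(1) by simp
  have "(1\<^sup>2 - 1) * f' 1 * f 1 < (t\<^sup>2 - 1) * f' t * f t"
  proof (rule DERIV_pos_imp_increasing_open[OF \<open>1 < t\<close>])
    fix x assume "1 < x" "x < t"
    then have "0 < chi - c\<^sup>2 * x\<^sup>2" "0 < (f x)\<^sup>2" "0 \<le> x\<^sup>2 - 1"
      using assms potential_pos_below_turning_point[of x] f_pos_below_turning_point[of x]
      by (simp_all add: one_le_power)
    then show "\<exists>d. ((\<lambda>t. (t\<^sup>2 - 1) * f' t * f t) has_real_derivative d) (at x) \<and> 0 < d"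
      using flux_product_deriv by (intro exI conjI) (auto intro: add_pos_nonneg)
  qed (auto intro!: continuous_intros continuous_on_f continuous_on_f')
  moreover have "0 < t\<^sup>2 - 1" "0 < f t"
    using \<open>1 < t\<close> assms f_pos_below_turning_point by (simp_all add: one_less_power)
  ultimately show ?thesis by (simp add: zero_less_mult_iff)
qed

lemma no_common_zero:
  assumes "1 < x" "f x = 0"
  shows "f' x \<noteq> 0"
proof
  assume "f' x = 0"
  show False
  proof (cases "x \<le> turning_point")
    case True
    then show False using f_pos_below_turning_point[of x] assms by simp
  next
    case False
    have "1 < turning_point\<^sup>2" using turning_point_gt_1 by (simp add: one_less_power)
    then have "0 < (turning_point\<^sup>2 - 1) * f' turning_point"
      using f'_pos_below_turning_point[of turning_point] turning_point_gt_1 by (intro mult_pos_pos) auto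
    then have "0 < ((turning_point\<^sup>2 - 1) * f' turning_point)\<^sup>2" by (rule zero_less_power)
    also have "\<dots> = energy turning_point" by (simp add: energy_def c_sq_turning_point_sq)
    also have "\<dots> \<le> energy x" using False by (intro energy_mono_above_turning_point) simp_all
    finally show False using assms(2) \<open>f' x = 0\<close> by (simp add: energy_def)
  qed
qed

lemma critical_point_above_turning_point: "1 < x \<Longrightarrow> f' x = 0 \<Longrightarrow> turning_point < x"
  using f'_pos_below_turning_point[of x] by (cases "x \<le> turning_point") auto

lemma critical_point_sign:
  assumes "1 < x" "f' x = 0"
  shows "f x * f'' x < 0"
proof -
  have "(x\<^sup>2 - 1) * (f x * f'' x) = (chi - c\<^sup>2 * x\<^sup>2) * (f x)\<^sup>2"
    using arg_cong[OF ode[of x], of "\<lambda>y. f x * y"] assms(2) by (simp add: algebra_simps power2_eq_square)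
  moreover have "chi - c\<^sup>2 * x\<^sup>2 < 0"
    using potential_neg_above_turning_point critical_point_above_turning_point assms by blast
  moreover have "f x \<noteq> 0" using no_common_zero assms by blast
  ultimately have "(x\<^sup>2 - 1) * (f x * f'' x) < 0" by (simp add: mult_neg_pos)
  moreover have "0 < x\<^sup>2 - 1" using assms(1) by (simp add: one_less_power)
  ultimately show ?thesis by (simp add: mult_less_0_iff)
qed

lemma finite_critical_points_below: "finite {s \<in> {t. 1 < t \<and> f' t = 0}. s \<le> b}"
proof -
  have "\<not> z islimpt {t. 1 < t \<and> f' t = 0}" if "z \<in> {1..b}" for z
  proof -
    have "f' z \<noteq> 0 \<or> f'' z \<noteq> 0"
    proof (cases "f' z = 0")
      case True
      then have "1 < z" using that f'_1_pos by (cases "z = 1") auto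
      then show ?thesis using critical_point_sign[OF _ True] by auto
    qed simp
    then have "\<not> z islimpt {t. f' t = 0}" by (rule not_islimpt_zeros[OF f'_deriv])
    then show ?thesis using islimpt_subset[of z "{t. 1 < t \<and> f' t = 0}" "{t. f' t = 0}"] by blast
  qed
  then have "finite ({1..b} \<inter> {t. 1 < t \<and> f' t = 0})"
    by (rule finite_not_islimpt_in_compact[OF compact_Icc])
  then show ?thesis by (rule rev_finite_subset) auto
qed

lemma critical_points_unbounded: "\<exists>s\<in>{t. 1 < t \<and> f' t = 0}. b < s"
proof -
  obtain z1 where "max b 1 < z1" "f z1 = 0" using oscillation by blast
  moreover obtain z2 where "z1 < z2" "f z2 = 0" using oscillation by blast
  ultimately obtain s where "z1 < s" "s < z2" "f' s = 0" using rolle[of z1 z2] by auto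
  with \<open>max b 1 < z1\<close> show ?thesis by (intro bexI[of _ s]) auto
qed

lemma sign_change_between_critical_points:
  assumes "1 < A" "A < B" "f' A = 0" "f' B = 0" and gap: "\<And>t. A < t \<Longrightarrow> t < B \<Longrightarrow> f' t \<noteq> 0"
  shows "f A * f B < 0"
proof -
  define m where "m = (A + B) / 2"
  define \<sigma> where "\<sigma> = f' m"
  have "A < m" "m < B" using assms(2) by (simp_all add: m_def)
  then have "\<sigma> \<noteq> 0" using gap by (simp add: \<sigma>_def)
  have same_sign: "0 < \<sigma> * f' t" if "A < t" "t < B" for t
  proof -
    have "f' r \<noteq> 0" if "r \<in> {min t m..max t m}" for r
      using that \<open>A < t\<close> \<open>t < B\<close> \<open>A < m\<close> \<open>m < B\<close> by (intro gap) auto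
    then have "0 < f' (min t m) * f' (max t m)"
      by (intro nonzero_imp_same_sign[OF _ continuous_on_f']) auto
    then show ?thesis by (cases "t \<le> m") (auto simp: \<sigma>_def min_def max_def mult.commute)
  qed
  have "0 \<le> \<sigma> * f'' A"
    by (rule DERIV_nonneg_at_root_of_positive_right[OF DERIV_cmult[OF f'_deriv] _ assms(2)])
      (use assms(3) same_sign in auto)
  moreover have "\<sigma> * f'' B \<le> 0"
    by (rule DERIV_nonpos_at_root_of_positive_left[OF DERIV_cmult[OF f'_deriv] _ assms(2)])
      (use assms(4) same_sign in auto)
  moreover have "f A * f'' A < 0" "f B * f'' B < 0"
    using critical_point_sign assms by auto
  ultimately show ?thesis using \<open>\<sigma> \<noteq> 0\<close>
    by (cases "\<sigma> > 0") (auto simp: mult_less_0_iff zero_le_mult_iff mult_le_0_iff)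
qed

lemma pos_before_first_critical_point:
  assumes "1 \<le> t" and no_critical: "\<And>s. 1 < s \<Longrightarrow> s < t \<Longrightarrow> f' s \<noteq> 0"
  shows "0 < f t"
proof (cases "t = 1")
  case True
  then show ?thesis using f_1_pos by simp
next
  case False
  then have "1 < t" using assms(1) by simp
  have "f 1 < f t"
  proof (rule DERIV_pos_imp_increasing_open[OF \<open>1 < t\<close>])
    fix s assume "1 < s" "s < t"
    have "f' r \<noteq> 0" if "r \<in> {1..s}" for r
      using that no_critical[of r] \<open>s < t\<close> f'_1_pos by (cases "r = 1") auto
    then have "0 < f' 1 * f' s"
      using \<open>1 < s\<close> by (intro nonzero_imp_same_sign[OF _ continuous_on_f']) auto
    then show "\<exists>d. (f has_real_derivative d) (at s) \<and> 0 < d"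
      using f'_1_pos f_deriv by (auto simp: zero_less_mult_iff)
  qed (rule continuous_on_f)
  then show ?thesis using f_1_pos by simp
qed

lemma unique_zero_between_critical_points:
  assumes "1 < A" "A < B" "f' A = 0" "f' B = 0" and gap: "\<And>t. A < t \<Longrightarrow> t < B \<Longrightarrow> f' t \<noteq> 0"
  shows "\<exists>!z. A < z \<and> z < B \<and> f z = 0"
proof (rule ex_ex1I)
  have "f A * f B < 0" by (rule sign_change_between_critical_points[OF assms])
  then obtain z where "z \<in> {A..B}" "f z = 0"
    using sign_change_imp_root[OF less_imp_le[OF assms(2)] continuous_on_f] by (meson less_imp_le)
  moreover have "z \<noteq> A" "z \<noteq> B"
    using no_common_zero[of A] no_common_zero[of B] assms \<open>f z = 0\<close> by auto
  ultimately show "\<exists>z. A < z \<and> z < B \<and> f z = 0" by (intro exI[of _ z]) auto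
next
  have no_two_zeros: False if uv: "A < u" "u < v" "v < B" "f u = 0" "f v = 0" for u v
  proof -
    obtain s where "u < s" "s < v" "f' s = 0" using rolle[OF uv(2)] uv(4,5) by auto
    then show False using gap[of s] uv(1,3) by simp
  qed
  fix z1 z2 assume z1: "A < z1 \<and> z1 < B \<and> f z1 = 0" and z2: "A < z2 \<and> z2 < B \<and> f z2 = 0"
  show "z1 = z2"
  proof (rule ccontr)
    assume "z1 \<noteq> z2"
    then consider "z1 < z2" | "z2 < z1" by linarith
    then show False
    proof cases
      case 1
      then show False using no_two_zeros[of z1 z2] z1 z2 by simp
    next
      case 2
      then show False using no_two_zeros[of z2 z1] z1 z2 by simp
    qed
  qed
qed

lemma exists_critical_point_before_zero:
  assumes "1 < z" "f z = 0"
  shows "\<exists>s. 1 < s \<and> s < z \<and> f' s = 0"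
  using pos_before_first_critical_point[of z] assms by force

lemma zero_between_consecutive_critical_points:
  assumes "strict_mono y" and range_y: "range y = {t. 1 < t \<and> f' t = 0}" and z: "1 < z" "f z = 0"
  shows "\<exists>k. y k < z \<and> z < y (Suc k)"
proof -
  obtain s where "1 < s" "s < z" "f' s = 0" using exists_critical_point_before_zero[OF z] by blast
  then have "s \<in> range y" unfolding range_y by simp
  then obtain j where "s = y j" by blast
  with \<open>strict_mono y\<close> have "y 0 \<le> s" by (simp add: strict_mono_less_eq)
  with \<open>s < z\<close> have "y 0 < z" by simp
  obtain s' where "1 < s'" "f' s' = 0" "z < s'" using critical_points_unbounded[of z] by blast
  then have "s' \<in> range y" unfolding range_y by simp
  with \<open>z < s'\<close> have "\<exists>k. z < y k" by blast
  then obtain k where "y k \<le> z" "z < y (Suc k)"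
    using exists_bracket_index less_imp_le[OF \<open>y 0 < z\<close>] by blast
  moreover have "y k \<in> range y" by simp
  then have "z \<noteq> y k" using no_common_zero[OF z] unfolding range_y by auto
  ultimately show ?thesis by (intro exI[of _ k]) simp
qed

lemma zeros_interlace:
  "\<exists>x y :: nat \<Rightarrow> real. strict_mono x \<and> strict_mono y \<and>
     range x = {t. t > 1 \<and> f t = 0} \<and> range y = {t. t > 1 \<and> f' t = 0} \<and>
     1 < turning_point \<and> turning_point < y 0 \<and> (\<forall>k. y k < x k \<and> x k < y (Suc k))"
proof -
  obtain y :: "nat \<Rightarrow> real" where "strict_mono y" and range_y: "range y = {t. 1 < t \<and> f' t = 0}"
    using exists_strict_mono_enumeration[OF finite_critical_points_below critical_points_unbounded]
    by blast
  have y_crit: "1 < y k" "f' (y k) = 0" for k using range_y by auto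
  have y_gap: "f' t \<noteq> 0" if "y k < t" "t < y (Suc k)" for k t
    using strict_mono_not_in_range_between[OF \<open>strict_mono y\<close> that] y_crit(1)[of k] that(1)
    unfolding range_y by auto
  have unique_zero: "\<exists>!z. y k < z \<and> z < y (Suc k) \<and> f z = 0" for k
    by (rule unique_zero_between_critical_points[OF y_crit(1) _ y_crit(2) y_crit(2) y_gap])
      (use \<open>strict_mono y\<close> in \<open>simp add: strict_mono_Suc_iff\<close>)
  define x where "x k = (THE z. y k < z \<and> z < y (Suc k) \<and> f z = 0)" for k
  have x_between: "y k < x k \<and> x k < y (Suc k) \<and> f (x k) = 0" for k
    unfolding x_def by (rule theI'[OF unique_zero])
  have "range x = {t. 1 < t \<and> f t = 0}"
  proof
    show "range x \<subseteq> {t. 1 < t \<and> f t = 0}"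
    proof (rule image_subsetI)
      fix k show "x k \<in> {t. 1 < t \<and> f t = 0}" using x_between[of k] y_crit(1)[of k] by simp
    qed
    show "{t. 1 < t \<and> f t = 0} \<subseteq> range x"
    proof
      fix z assume "z \<in> {t. 1 < t \<and> f t = 0}"
      then have z: "1 < z" "f z = 0" by auto
      then obtain k where "y k < z" "z < y (Suc k)"
        using zero_between_consecutive_critical_points[OF \<open>strict_mono y\<close> range_y] by blast
      then have "x k = z"
        unfolding x_def by (intro the1_equality[OF unique_zero]) (use z(2) in auto)
      then show "z \<in> range x" by (metis rangeI)
    qed
  qed
  moreover have "strict_mono x"
  proof -
    have "x k < x (Suc k)" for k using x_between[of k] x_between[of "Suc k"] by linarith
    then show ?thesis by (simp add: strict_mono_Suc_iff)
  qed
  moreover have "turning_point < y 0" by (rule critical_point_above_turning_point[OF y_crit])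
  ultimately show ?thesis
    using \<open>strict_mono y\<close> range_y turning_point_gt_1 x_between
    by (intro exI[of _ x] exI[of _ y]) simp
qed

end

lemma (in prolate_solution) zeros_interlace_if_nonzero_at_1:
  assumes "f 1 \<noteq> 0"
  shows "\<exists>x y :: nat \<Rightarrow> real. strict_mono x \<and> strict_mono y \<and>
     range x = {t. t > 1 \<and> f t = 0} \<and> range y = {t. t > 1 \<and> f' t = 0} \<and>
     1 < sqrt chi / c \<and> sqrt chi / c < y 0 \<and> (\<forall>k. y k < x k \<and> x k < y (Suc k))"
proof -
  define s where "s = sgn (f 1)"
  have "s \<noteq> 0" using assms by (simp add: s_def sgn_if)
  interpret scaled: prolate_solution_pos c chi "\<lambda>t. s * f t" "\<lambda>t. s * f' t" "\<lambda>t. s * f'' t"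
  proof unfold_locales
    show "((\<lambda>t. s * f t) has_real_derivative s * f' x) (at x)" for x by (rule DERIV_cmult[OF f_deriv])
    show "((\<lambda>t. s * f' t) has_real_derivative s * f'' x) (at x)" for x by (rule DERIV_cmult[OF f'_deriv])
    show "(1 - x\<^sup>2) * (s * f'' x) - 2 * x * (s * f' x) + (chi - c\<^sup>2 * x\<^sup>2) * (s * f x) = 0" for x
      using arg_cong[OF ode[of x], of "\<lambda>z. s * z"] by (simp add: algebra_simps)
    show "0 < s * f 1" using assms by (simp add: s_def sgn_if)
  qed (use c_pos chi_gt in auto)
  show ?thesis using scaled.zeros_interlace \<open>s \<noteq> 0\<close> unfolding scaled.turning_point_def by simp
qed

theorem theorem29:
  fixes c chi :: real and n :: nat and lam :: "nat \<Rightarrow> complex" and Psi :: "nat \<Rightarrow> real \<Rightarrow> real"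
  assumes "c > 0"
    and "pswf_system c lam Psi"
    and "chi > 0"
    and "prolate_ode c chi (Psi n)"
    and "chi > c\<^sup>2"
  shows "\<exists>x y :: nat \<Rightarrow> real.
           strict_mono x \<and> strict_mono y \<and>
           range x = {t. t > 1 \<and> Psi n t = 0} \<and>
           range y = {t. t > 1 \<and> deriv (Psi n) t = 0} \<and>
           1 < sqrt chi / c \<and> sqrt chi / c < y 0 \<and>
           (\<forall>k. y k < x k \<and> x k < y (Suc k))"
proof -
  have cont: "continuous_on {-1..1} (Psi n)"
    and eigen: "\<And>x. lam n * of_real (Psi n x) = fin_fourier c (Psi n) x"
    and normalized: "integral {-1..1} (\<lambda>t. Psi n t * Psi n t) = 1"
    using assms(2) continuous_on_subset[of UNIV "Psi n"] by (auto simp: pswf_system_def)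
  have "lam n \<noteq> 0"
  proof
    assume "lam n = 0"
    then have transform_zero: "fin_fourier c (Psi n) x = 0" for x using eigen[of x] by simp
    have "integral {-1..1} (\<lambda>t. Psi n t * t ^ k) = 0" for k
      by (rule moments_eq_0_if_fin_fourier_eq_0[OF cont _ transform_zero]) (use assms(1) in simp)
    then show False using integral_square_eq_0_if_moments_eq_0[OF cont] normalized by simp
  qed
  interpret prolate_solution c chi "Psi n" "deriv (Psi n)" "deriv (deriv (Psi n))"
    using assms(1,4,5) fin_fourier_eigenfunction_derivatives[OF cont \<open>lam n \<noteq> 0\<close> eigen]
    by unfold_locales (auto simp: prolate_ode_def)
  have "Psi n 1 \<noteq> 0" using integral_square_eq_0_if_vanishes_at_1 normalized by auto
  then show ?thesis by (rule zeros_interlace_if_nonzero_at_1)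
qed

end
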